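(* Let $p$ be a prime and let $A=\mathbb{Z}/(p^{\alpha_1})\times\cdots\times\mathbb{Z}/(p^{\alpha_m})$ for integers $1\le\alpha_1\le\cdots\le\alpha_m$. Then for every automorphism $M\in\operatorname{Aut}(A)$ whose order is a power of $p$, there exists a group endomorphism $N$ of $A$ such that $(M-\operatorname{Id})^m=pN$.
   Context: Here $M-\operatorname{Id}$ is the endomorphism $a\mapsto M(a)-a$ of the abelian group $A$, powers denote composition, and $pN$ is the endomorphism $a\mapsto pN(a)$. *)

theory Defs
  imports "HOL-Algebra.Group" "HOL-Computational_Algebra.Primes"
begin

text \<open>The abelian group Z/(p^alpha_0) x ... x Z/(p^alpha_(m-1)), with elements
  represented as integer sequences whose i-th entry lies in 0 ..< p^(alpha i) for i < m
  and is 0 for i >= m; the operation is componentwise addition modulo p^(alpha i).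
  It is written multiplicatively as an HOL-Algebra monoid record.\<close>

definition cyc_prod :: "nat \<Rightarrow> (nat \<Rightarrow> nat) \<Rightarrow> nat \<Rightarrow> (nat \<Rightarrow> int) monoid" where
  "cyc_prod p \<alpha> m =
     \<lparr> carrier = {a. (\<forall>i<m. 0 \<le> a i \<and> a i < int p ^ \<alpha> i) \<and> (\<forall>i\<ge>m. a i = 0)},
       monoid.mult = (\<lambda>a b i. if i < m then (a i + b i) mod (int p ^ \<alpha> i) else 0),
       one = (\<lambda>i. 0) \<rparr>"

end

theory Submission
  imports Defs "HOL-Computational_Algebra.Polynomial" "HOL-Algebra.Coset"
begin

(* Write A additively and let D = M - Id. In Z[X] we have (X - 1)^(p^k) = X^(p^k) - 1 + p s(X),
   and M^(p^k) = Id, so D^(p^k) = p s(M). Fix a generator e_i, of order p^(alpha_i), and put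
   H = A[p^(alpha_i)] and K = pH. Both are D-invariant, H/K has order p^m, and D^(p^k) maps H
   into K; so the subgroups {x in H. D^j x in K} increase strictly by a factor of at least p until
   they reach H, which forces D^m H <= K. Hence D^m e_i = p y_i with p^(alpha_i) y_i = 0, and
   e_i |-> y_i extends to an endomorphism N with D^m = pN. *)

lemma prime_dvd_add_power_prime:
  fixes x y :: "'a::comm_ring_1"
  assumes "prime p"
  shows "of_nat p dvd (x + y) ^ p - x ^ p - y ^ p"
proof -
  define F where "F k = of_nat (p choose k) * x ^ k * y ^ (p - k)" for k
  have "p > 0" using assms prime_gt_0_nat by blast
  have "{..p} = insert 0 (insert p {0<..<p})" using \<open>p > 0\<close> by auto
  then have "(x + y) ^ p = F 0 + F p + (\<Sum>k\<in>{0<..<p}. F k)"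
    unfolding binomial_ring F_def using \<open>p > 0\<close> by (simp add: add.assoc)
  moreover have "F 0 = y ^ p" "F p = x ^ p" by (simp_all add: F_def)
  moreover have "of_nat p dvd (\<Sum>k\<in>{0<..<p}. F k)"
  proof (rule dvd_sum)
    fix k assume "k \<in> {0<..<p}"
    then have "p dvd p choose k" using dvd_choose_prime assms by auto
    then obtain c where "p choose k = p * c" by (rule dvdE)
    then show "of_nat p dvd F k" unfolding F_def by (simp add: mult.assoc)
  qed
  ultimately show ?thesis by (simp add: algebra_simps)
qed

lemma prime_dvd_minus_one_power_prime:
  fixes x :: "'a::comm_ring_1"
  assumes "prime p"
  shows "of_nat p dvd (x - 1) ^ p - (x ^ p - 1)"
proof -
  have "of_nat p dvd (x + - 1) ^ p - x ^ p - (- 1) ^ p"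
    using prime_dvd_add_power_prime[OF assms] .
  moreover have "of_nat p dvd (- 1 :: 'a) ^ p + 1"
  proof (cases "p = 2")
    case False
    then have "p > 2" using prime_ge_2_nat[OF assms] by linarith
    then have "odd p" using prime_odd_nat[OF assms] by blast
    then show ?thesis by simp
  qed simp
  ultimately have "of_nat p dvd ((x + - 1) ^ p - x ^ p - (- 1) ^ p) + ((- 1) ^ p + 1)"
    by (rule dvd_add)
  then show ?thesis by (simp add: algebra_simps)
qed

lemma prime_dvd_minus_one_power_prime_power:
  fixes x :: "'a::comm_ring_1"
  assumes "prime p"
  shows "of_nat p dvd (x - 1) ^ (p ^ k) - (x ^ (p ^ k) - 1)"
proof (induction k)
  case 0 show ?case by simp
next
  case (Suc k)
  define a b where "a = (x - 1) ^ (p ^ k)" and "b = x ^ (p ^ k) - 1"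
  have "a - b dvd a ^ p - b ^ p" unfolding power_diff_sumr2 by simp
  then have "of_nat p dvd a ^ p - b ^ p" using Suc.IH unfolding a_def b_def by (rule dvd_trans[rotated])
  moreover have "of_nat p dvd b ^ p - ((x ^ p ^ k) ^ p - 1)"
    unfolding b_def by (rule prime_dvd_minus_one_power_prime[OF assms])
  ultimately have "of_nat p dvd (a ^ p - b ^ p) + (b ^ p - ((x ^ p ^ k) ^ p - 1))"
    by (rule dvd_add)
  then have "of_nat p dvd a ^ p - ((x ^ p ^ k) ^ p - 1)" by (simp add: algebra_simps)
  then show ?case unfolding a_def by (simp only: power_Suc2 power_mult)
qed

lemma (in comm_group) nat_pow_hom: "(\<lambda>x. x [^] (n::nat)) \<in> hom G G"
  by (rule homI) (simp_all add: nat_pow_distrib)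

lemma (in group) funpow_hom: "D \<in> hom G G \<Longrightarrow> D ^^ n \<in> hom G G"
proof (induction n)
  case 0 show ?case by (simp add: id_def hom_def)
next
  case (Suc n)
  with Group.hom_compose[OF Suc.IH[OF Suc.prems] Suc.prems] show ?case by (simp only: funpow.simps)
qed

lemma (in comm_group) endo_minus_id_hom:
  assumes "M \<in> hom G G" shows "(\<lambda>x. M x \<otimes> inv x) \<in> hom G G"
  using assms by (intro homI) (auto simp: hom_in_carrier hom_mult inv_mult m_ac)

(* The action of f(M) on G, where G is made a Z[X]-module by letting X act as M;
   f(M) x is evaluated by Horner's rule in multiplicative notation. *)
definition poly_endo :: "('a, 'b) monoid_scheme \<Rightarrow> ('a \<Rightarrow> 'a) \<Rightarrow> int poly \<Rightarrow> 'a \<Rightarrow> 'a" where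
  "poly_endo G M f x = foldr (\<lambda>c y. x [^]\<^bsub>G\<^esub> c \<otimes>\<^bsub>G\<^esub> M y) (coeffs f) \<one>\<^bsub>G\<^esub>"

context comm_group
begin

context
  fixes M assumes endo: "M \<in> hom G G"
begin

lemma endo_one: "M \<one> = \<one>"
  using hom_one[OF endo is_group is_group] .

lemma poly_endo_0 [simp]: "poly_endo G M 0 x = \<one>"
  by (simp add: poly_endo_def)

lemma poly_endo_pCons: "poly_endo G M (pCons a f) x = x [^] a \<otimes> M (poly_endo G M f x)"
proof (cases "f = 0 \<and> a = 0")
  case True then show ?thesis by (simp add: poly_endo_def endo_one)
next
  case False then show ?thesis by (auto simp: poly_endo_def cCons_def)
qed

lemma poly_endo_closed: "x \<in> carrier G \<Longrightarrow> poly_endo G M f x \<in> carrier G"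
  by (induction f rule: pCons_induct) (simp_all add: poly_endo_pCons hom_in_carrier[OF endo])

lemma poly_endo_add:
  assumes "x \<in> carrier G"
  shows "poly_endo G M (f + g) x = poly_endo G M f x \<otimes> poly_endo G M g x"
proof (induction f arbitrary: g rule: pCons_induct)
  case (pCons a f)
  obtain b g' where "g = pCons b g'" by (rule pCons_cases)
  with pCons.IH show ?case using assms
    by (simp add: poly_endo_pCons int_pow_mult hom_mult[OF endo] hom_in_carrier[OF endo]
        poly_endo_closed m_ac)
qed (simp add: assms poly_endo_closed)

lemma poly_endo_smult:
  assumes "x \<in> carrier G"
  shows "poly_endo G M (smult c f) x = poly_endo G M f x [^] c"
proof (induction f rule: pCons_induct)
  case (pCons a f)
  then show ?case using assms
    by (simp add: poly_endo_pCons hom_int_pow[OF endo _ is_group is_group] hom_in_carrier[OF endo]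
        poly_endo_closed int_pow_distrib int_pow_pow mult.commute)
qed simp

lemma poly_endo_1: "x \<in> carrier G \<Longrightarrow> poly_endo G M 1 x = x"
  by (simp add: one_pCons poly_endo_pCons endo_one)

lemma poly_endo_mult:
  assumes "x \<in> carrier G"
  shows "poly_endo G M (f * g) x = poly_endo G M f (poly_endo G M g x)"
proof (induction f rule: pCons_induct)
  case (pCons a f)
  then show ?case using assms
    by (simp add: poly_endo_add poly_endo_smult poly_endo_pCons poly_endo_closed
        hom_in_carrier[OF endo])
qed simp

lemma poly_endo_X: "x \<in> carrier G \<Longrightarrow> poly_endo G M [:0, 1:] x = M x"
  by (simp add: poly_endo_pCons poly_endo_1 endo_one hom_in_carrier[OF endo])

lemma poly_endo_power_X:
  assumes "x \<in> carrier G"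
  shows "poly_endo G M ([:0, 1:] ^ n) x = (M ^^ n) x"
proof (induction n)
  case (Suc n)
  have "poly_endo G M ([:0, 1:] ^ Suc n) x = poly_endo G M [:0, 1:] (poly_endo G M ([:0, 1:] ^ n) x)"
    by (simp only: power_Suc poly_endo_mult[OF assms])
  moreover have "(M ^^ n) x \<in> carrier G" using Suc.IH poly_endo_closed[OF assms] by metis
  ultimately show ?case using Suc.IH by (simp add: poly_endo_X)
qed (simp add: assms poly_endo_1)

lemma poly_endo_hom: "poly_endo G M f \<in> hom G G"
proof (rule homI)
  fix x y assume "x \<in> carrier G" "y \<in> carrier G"
  then show "poly_endo G M f (x \<otimes> y) = poly_endo G M f x \<otimes> poly_endo G M f y"
    by (induction f rule: pCons_induct)
       (simp_all add: poly_endo_pCons int_pow_distrib hom_mult[OF endo] hom_in_carrier[OF endo]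
        poly_endo_closed m_ac)
qed (rule poly_endo_closed)

lemma funpow_endo_minus_id:
  assumes "x \<in> carrier G"
  shows "((\<lambda>x. M x \<otimes> inv x) ^^ n) x = poly_endo G M ([:-1, 1:] ^ n) x"
proof (induction n)
  case 0 show ?case using assms by (simp add: poly_endo_1)
next
  case (Suc n)
  have "poly_endo G M [:-1, 1:] y = M y \<otimes> inv y" if "y \<in> carrier G" for y
    using that by (simp add: poly_endo_pCons poly_endo_1 endo_one hom_in_carrier[OF endo] int_pow_neg m_comm)
  moreover have "poly_endo G M ([:-1, 1:] ^ Suc n) x
      = poly_endo G M [:-1, 1:] (poly_endo G M ([:-1, 1:] ^ n) x)"
    by (simp only: power_Suc poly_endo_mult[OF assms])
  ultimately show ?case using Suc.IH assms by (simp add: poly_endo_closed)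
qed

end

end

lemma (in comm_group) endo_minus_id_power_prime_power:
  assumes "prime p" and endo: "M \<in> hom G G" and period: "\<forall>x\<in>carrier G. (M ^^ (p ^ k)) x = x"
  obtains s where "\<forall>x\<in>carrier G. ((\<lambda>x. M x \<otimes> inv x) ^^ (p ^ k)) x = poly_endo G M s x [^] p"
proof -
  obtain s where s: "([:0, 1:] - 1) ^ (p ^ k) - ([:0, 1:] ^ (p ^ k) - 1) = (of_nat p :: int poly) * s"
    using prime_dvd_minus_one_power_prime_power[OF \<open>prime p\<close>] by (rule dvdE)
  have identity: "[:-1, 1:] ^ (p ^ k) + 1 = [:0, 1:] ^ (p ^ k) + smult (int p) s"
    using s by (simp add: one_pCons of_nat_poly algebra_simps)
  have "((\<lambda>x. M x \<otimes> inv x) ^^ (p ^ k)) x = poly_endo G M s x [^] p" if x: "x \<in> carrier G" for x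
  proof -
    have "((\<lambda>x. M x \<otimes> inv x) ^^ (p ^ k)) x \<otimes> x = poly_endo G M ([:-1, 1:] ^ (p ^ k) + 1) x"
      using x endo by (simp add: funpow_endo_minus_id poly_endo_add poly_endo_1)
    also have "\<dots> = x \<otimes> poly_endo G M s x [^] p"
      unfolding identity using x endo period
      by (simp add: poly_endo_add poly_endo_smult poly_endo_power_X int_pow_int)
    finally show ?thesis
      using x endo by (simp add: poly_endo_closed funpow_endo_minus_id m_comm)
  qed
  then show ?thesis using that by blast
qed

lemma (in comm_group) subgroup_pow_kernel: "subgroup (kernel G G (\<lambda>x. x [^] (n::nat))) G"
  using nat_pow_hom by (intro group_hom.subgroup_kernel) (simp add: group_hom_def group_hom_axioms_def)

lemma (in comm_group) subgroup_pow_image: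
  "subgroup H G \<Longrightarrow> subgroup ((\<lambda>x. x [^] (n::nat)) ` H) G"
  using nat_pow_hom by (intro group_hom.subgroup_img_is_subgroup) (simp_all add: group_hom_def group_hom_axioms_def)

lemma (in comm_group) endo_pow_kernel:
  assumes "f \<in> hom G G" "x \<in> kernel G G (\<lambda>x. x [^] (n::nat))"
  shows "f x \<in> kernel G G (\<lambda>x. x [^] n)"
  using assms by (auto simp: kernel_def hom_in_carrier hom_one is_group
      simp flip: hom_nat_pow[OF assms(1) _ is_group is_group])

lemma (in comm_group) endo_pow_image:
  assumes "f \<in> hom G G" "\<And>x. x \<in> H \<Longrightarrow> f x \<in> H" "H \<subseteq> carrier G" "y \<in> (\<lambda>x. x [^] (n::nat)) ` H"
  shows "f y \<in> (\<lambda>x. x [^] n) ` H"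
  using assms by (force simp: hom_nat_pow[OF assms(1) _ is_group is_group])

(* Each strict step of the chain multiplies its order by at least p, and the index of T 0 in H
   leaves room for at most r such steps; once the chain stalls it is constant, hence equal to H. *)
lemma (in group) increasing_subgroup_chain_reaches_top:
  fixes T :: "nat \<Rightarrow> 'a set"
  assumes "prime p" and H: "subgroup H G" "finite H" "card H = p ^ e"
    and T: "\<And>j. subgroup (T j) G" "\<And>j. T j \<subseteq> T (Suc j)" "\<And>j. T j \<subseteq> H"
    and stable: "\<And>j. T (Suc j) = T j \<Longrightarrow> T (Suc (Suc j)) = T (Suc j)"
    and reach: "T n = H"
    and index: "card H = p ^ r * card (T 0)"
  shows "T r = H"
proof -
  have mono: "T j \<subseteq> T l" if "j \<le> l" for j l
    using lift_Suc_mono_le[of T, OF T(2) that] .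
  have stays: "T (Suc l) = T l \<and> T l = T j" if "T (Suc j) = T j" "j \<le> l" for j l
    using that(2) by (induction l rule: dec_induct) (use that(1) stable in metis)+
  have finite_T: "finite (T j)" for j using T(3) H(2) finite_subset by blast
  have card_dvd: "card (T j) dvd card (T l)" if "j \<le> l" for j l
  proof -
    interpret Tl: group "G\<lparr>carrier := T l\<rparr>" by (rule subgroup.subgroup_is_group[OF T(1) is_group])
    have "subgroup (T j) (G\<lparr>carrier := T l\<rparr>)" using subgroup_incl[OF T(1) T(1) mono[OF that]] .
    from Tl.lagrange[OF this] show ?thesis by (simp add: order_def) (metis dvd_triv_right)
  qed
  have prime_power: "\<exists>i. card (T j) = p ^ i" for j
  proof -
    have "card (T j) dvd p ^ e" using H(3) card_dvd[of j "max j n"] reach mono[of n "max j n"] T(3)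
      by (metis dual_order.refl max.cobounded1 max.cobounded2 subset_antisym)
    then show ?thesis using divides_primepow_nat[OF \<open>prime p\<close>] by auto
  qed
  have growth: "T j = H \<or> card (T 0) * p ^ j \<le> card (T j)" for j
  proof (induction j)
    case (Suc j)
    show ?case
    proof (cases "T j = H")
      case True then show ?thesis using T(2)[of j] T(3)[of "Suc j"] by blast
    next
      case False
      have "T (Suc j) \<noteq> T j"
        using stays[of j "max j n"] reach mono[of n "max j n"] T(3) False by fastforce
      then have "card (T j) < card (T (Suc j))"
        using T(2)[of j] finite_T[of "Suc j"] by (intro psubset_card_mono) auto
      moreover obtain a b where a: "card (T j) = p ^ a" and b: "card (T (Suc j)) = p ^ b"
        using prime_power by blast
      ultimately have "a < b" using prime_gt_1_nat[OF \<open>prime p\<close>] power_less_imp_less_exp by auto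
      then have "p ^ Suc a \<le> p ^ b" using prime_gt_0_nat[OF \<open>prime p\<close>] by (intro power_increasing) auto
      then have "p * card (T j) \<le> card (T (Suc j))" using a b by simp
      moreover have "p * (card (T 0) * p ^ j) \<le> p * card (T j)" using Suc.IH False by simp
      ultimately have "p * (card (T 0) * p ^ j) \<le> card (T (Suc j))" by linarith
      then show ?thesis by (simp add: mult_ac)
    qed
  qed simp
  show ?thesis
  proof (rule ccontr)
    assume "T r \<noteq> H"
    then have "card (T r) < card H" using T(3)[of r] H(2) by (intro psubset_card_mono) auto
    then show False using growth[of r] index by (simp add: mult.commute)
  qed
qed

lemma (in group) funpow_endo_into_subgroup:
  assumes "prime p" and D: "D \<in> hom G G"
    and H: "subgroup H G" "finite H" "card H = p ^ e" and K: "subgroup K G" "K \<subseteq> H"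
    and invariant: "\<And>x. x \<in> H \<Longrightarrow> D x \<in> H" "\<And>x. x \<in> K \<Longrightarrow> D x \<in> K"
    and nilpotent: "\<And>x. x \<in> H \<Longrightarrow> (D ^^ n) x \<in> K"
    and index: "card H = p ^ r * card K"
    and "x \<in> H"
  shows "(D ^^ r) x \<in> K"
proof -
  define T where "T j = {x \<in> H. (D ^^ j) x \<in> K}" for j
  have "subgroup (T j) G" for j
  proof -
    interpret Dj: group_hom G G "D ^^ j"
      using funpow_hom[OF D] by (simp add: group_hom_def group_hom_axioms_def is_group)
    show ?thesis unfolding T_def
      using subgroup.subset[OF H(1)] subgroup.one_closed[OF H(1)] subgroup.one_closed[OF K(1)]
      by (intro subgroupI) (auto simp: Dj.hom_mult subsetD
          subgroup.m_inv_closed[OF H(1)] subgroup.m_inv_closed[OF K(1)]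
          subgroup.m_closed[OF H(1)] subgroup.m_closed[OF K(1)])
  qed
  moreover have "T j \<subseteq> T (Suc j)" for j
    unfolding T_def using invariant(2) by auto
  moreover have "T (Suc (Suc j)) = T (Suc j)" if "T (Suc j) = T j" for j
  proof
    show "T (Suc (Suc j)) \<subseteq> T (Suc j)"
    proof
      fix y assume y: "y \<in> T (Suc (Suc j))"
      then have "D y \<in> T (Suc j)" using invariant(1) unfolding T_def by (simp add: funpow_swap1)
      then have "D y \<in> T j" using that by simp
      then show "y \<in> T (Suc j)" using y unfolding T_def by (simp add: funpow_swap1)
    qed
  qed (use \<open>\<And>j. T j \<subseteq> T (Suc j)\<close> in blast)
  moreover have "T 0 = K" "T n = H" using K(2) nilpotent unfolding T_def by auto
  ultimately have "T r = H"
    using increasing_subgroup_chain_reaches_top[OF \<open>prime p\<close> H, of T n r] index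
    unfolding T_def by auto
  then show ?thesis using \<open>x \<in> H\<close> unfolding T_def by blast
qed

lemma power_dvd_power_mult_iff:
  fixes q x :: "'a::idom"
  assumes "q \<noteq> 0"
  shows "q ^ b dvd q ^ a * x \<longleftrightarrow> q ^ (b - min a b) dvd x"
proof (cases "a \<le> b")
  case True
  then have "q ^ b = q ^ a * q ^ (b - a)" by (simp flip: power_add)
  then show ?thesis using True assms by simp
next
  case False
  then have "q ^ b dvd q ^ a" by (simp add: le_imp_power_dvd)
  then show ?thesis using False by simp
qed

locale cyclic_prime_power_product =
  fixes p m :: nat and \<alpha> :: "nat \<Rightarrow> nat"
  assumes prime: "prime p" and exponent_pos: "\<forall>i<m. 1 \<le> \<alpha> i"
begin

abbreviation A where "A \<equiv> cyc_prod p \<alpha> m"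

definition modulus :: "nat \<Rightarrow> int" where "modulus i = int p ^ \<alpha> i"

definition reduce :: "(nat \<Rightarrow> int) \<Rightarrow> nat \<Rightarrow> int" where
  "reduce u = (\<lambda>i. if i < m then u i mod modulus i else 0)"

definition unit_vec :: "nat \<Rightarrow> nat \<Rightarrow> int" where "unit_vec i = (\<lambda>j. if j = i then 1 else 0)"

lemma p_gt_1: "int p > 1" using prime prime_gt_1_nat by auto

lemma modulus_pos: "modulus i > 0" unfolding modulus_def using p_gt_1 by simp

lemma modulus_gt_1: "i < m \<Longrightarrow> modulus i > 1"
  unfolding modulus_def using exponent_pos p_gt_1 by (intro one_less_power) auto

lemma carrier_cyc_prod:
  "x \<in> carrier A \<longleftrightarrow> (\<forall>i<m. 0 \<le> x i \<and> x i < modulus i) \<and> (\<forall>i\<ge>m. x i = 0)"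
  by (simp add: cyc_prod_def modulus_def)

lemma mult_cyc_prod: "x \<otimes>\<^bsub>A\<^esub> y = reduce (\<lambda>i. x i + y i)"
  unfolding cyc_prod_def reduce_def modulus_def by simp

lemma one_cyc_prod: "\<one>\<^bsub>A\<^esub> = (\<lambda>i. 0)"
  by (simp add: cyc_prod_def)

lemma reduce_closed [simp]: "reduce u \<in> carrier A"
  unfolding carrier_cyc_prod reduce_def using modulus_pos by auto

lemma reduce_zero: "reduce (\<lambda>i. 0) = (\<lambda>i. 0)"
  by (simp add: reduce_def fun_eq_iff)

lemma reduce_id: "x \<in> carrier A \<Longrightarrow> reduce x = x"
  unfolding carrier_cyc_prod reduce_def by auto

lemma reduce_eq_iff: "reduce u = reduce v \<longleftrightarrow> (\<forall>i<m. u i mod modulus i = v i mod modulus i)"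
  unfolding reduce_def fun_eq_iff by metis

lemma reduce_cong: "(\<And>i. i < m \<Longrightarrow> u i mod modulus i = v i mod modulus i) \<Longrightarrow> reduce u = reduce v"
  using reduce_eq_iff by blast

lemma reduce_mod_simps:
  assumes "i < m"
  shows "reduce u i mod modulus i = u i mod modulus i"
    "(reduce u i + c) mod modulus i = (u i + c) mod modulus i"
    "(c + reduce u i) mod modulus i = (c + u i) mod modulus i"
  using assms by (simp_all add: reduce_def mod_add_left_eq mod_add_right_eq)

lemma comm_group_cyc_prod: "comm_group A"
proof (rule comm_groupI)
  fix x y assume "x \<in> carrier A" "y \<in> carrier A"
  show "x \<otimes>\<^bsub>A\<^esub> y \<in> carrier A" by (simp add: mult_cyc_prod)
next
  show "\<one>\<^bsub>A\<^esub> \<in> carrier A" using modulus_pos by (simp add: one_cyc_prod carrier_cyc_prod)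
next
  fix x y z assume "x \<in> carrier A" "y \<in> carrier A" "z \<in> carrier A"
  show "x \<otimes>\<^bsub>A\<^esub> y \<otimes>\<^bsub>A\<^esub> z = x \<otimes>\<^bsub>A\<^esub> (y \<otimes>\<^bsub>A\<^esub> z)"
    unfolding mult_cyc_prod by (rule reduce_cong) (simp add: reduce_mod_simps add.assoc)
next
  fix x y show "x \<otimes>\<^bsub>A\<^esub> y = y \<otimes>\<^bsub>A\<^esub> x" by (simp add: mult_cyc_prod add.commute)
next
  fix x assume "x \<in> carrier A"
  then show "\<one>\<^bsub>A\<^esub> \<otimes>\<^bsub>A\<^esub> x = x" by (simp add: mult_cyc_prod one_cyc_prod reduce_id)
next
  fix x assume "x \<in> carrier A"
  have "reduce (\<lambda>i. - x i) \<otimes>\<^bsub>A\<^esub> x = reduce (\<lambda>i. 0)"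
    unfolding mult_cyc_prod by (rule reduce_cong) (simp only: reduce_mod_simps, simp)
  then show "\<exists>y\<in>carrier A. y \<otimes>\<^bsub>A\<^esub> x = \<one>\<^bsub>A\<^esub>"
    unfolding reduce_zero one_cyc_prod using reduce_closed by blast
qed

interpretation A: comm_group A by (rule comm_group_cyc_prod)

abbreviation torsion :: "nat \<Rightarrow> (nat \<Rightarrow> int) set" where
  "torsion a \<equiv> kernel A A (\<lambda>x. x [^]\<^bsub>A\<^esub> (p ^ a))"

lemma nat_pow_cyc_prod: "x \<in> carrier A \<Longrightarrow> x [^]\<^bsub>A\<^esub> (n::nat) = reduce (\<lambda>i. int n * x i)"
proof (induction n)
  case 0 then show ?case by (simp add: one_cyc_prod reduce_zero)
next
  case (Suc n) then show ?case
    unfolding nat_pow_Suc mult_cyc_prod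
    by (intro reduce_cong) (simp add: reduce_mod_simps distrib_right add.commute)
qed

lemma pow_eq_one_cyc_prod:
  "x \<in> carrier A \<Longrightarrow> x [^]\<^bsub>A\<^esub> (n::nat) = \<one>\<^bsub>A\<^esub> \<longleftrightarrow> (\<forall>i<m. modulus i dvd int n * x i)"
proof -
  assume "x \<in> carrier A"
  then have "x [^]\<^bsub>A\<^esub> n = \<one>\<^bsub>A\<^esub> \<longleftrightarrow> reduce (\<lambda>i. int n * x i) = reduce (\<lambda>i. 0)"
    by (simp add: nat_pow_cyc_prod one_cyc_prod reduce_zero)
  then show ?thesis by (simp add: reduce_eq_iff dvd_eq_mod_eq_0)
qed

lemma unit_vec_closed: "i < m \<Longrightarrow> unit_vec i \<in> carrier A"
  unfolding carrier_cyc_prod unit_vec_def using modulus_gt_1 modulus_pos by auto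

lemma hom_eq_on_unit_vecs:
  assumes f: "f \<in> hom A A" and g: "g \<in> hom A A" and "\<forall>i<m. f (unit_vec i) = g (unit_vec i)"
    and x: "x \<in> carrier A"
  shows "f x = g x"
proof -
  define trunc where "trunc n = (\<lambda>j. if j < n then x j else 0)" for n
  have trunc_closed: "trunc n \<in> carrier A" for n
    using x unfolding trunc_def carrier_cyc_prod using modulus_pos by auto
  have trunc_Suc: "trunc (Suc n) = trunc n \<otimes>\<^bsub>A\<^esub> unit_vec n [^]\<^bsub>A\<^esub> nat (x n)" if "n < m" for n
  proof -
    have "x n \<ge> 0" using x that by (simp add: carrier_cyc_prod)
    then have "reduce (trunc (Suc n)) = reduce (\<lambda>j. trunc n j + reduce (\<lambda>j. int (nat (x n)) * unit_vec n j) j)"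
      by (intro reduce_cong) (auto simp: reduce_mod_simps trunc_def unit_vec_def less_Suc_eq)
    then show ?thesis
      by (simp add: reduce_id[OF trunc_closed] mult_cyc_prod nat_pow_cyc_prod unit_vec_closed[OF that])
  qed
  have "f (trunc n) = g (trunc n)" if "n \<le> m" for n
    using that
  proof (induction n)
    case 0
    have "trunc 0 = \<one>\<^bsub>A\<^esub>" by (simp add: trunc_def one_cyc_prod)
    then show ?case using hom_one[OF f A.is_group A.is_group] hom_one[OF g A.is_group A.is_group] by simp
  next
    case (Suc n)
    then show ?case using assms(3) trunc_closed unit_vec_closed
      by (simp add: trunc_Suc hom_mult[OF f] hom_mult[OF g] A.nat_pow_closed
          hom_nat_pow[OF f _ A.is_group A.is_group] hom_nat_pow[OF g _ A.is_group A.is_group])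
  qed
  moreover have "trunc m = x" using x by (auto simp: trunc_def carrier_cyc_prod)
  ultimately show ?thesis by auto
qed

lemma ex_hom_unit_vec_images:
  assumes "\<forall>i<m. y i \<in> torsion (\<alpha> i)"
  shows "\<exists>N\<in>hom A A. \<forall>i<m. N (unit_vec i) = y i"
proof
  define N where "N x = reduce (\<lambda>j. \<Sum>i<m. x i * y i j)" for x
  have killed: "modulus j dvd modulus i * y i j" if "i < m" "j < m" for i j
    using assms that pow_eq_one_cyc_prod[of "y i" "p ^ \<alpha> i"] by (simp add: kernel_def modulus_def)
  show "\<forall>i<m. N (unit_vec i) = y i"
  proof (intro allI impI)
    fix i assume i: "i < m"
    have "(\<Sum>k<m. unit_vec i k * y k j) = (\<Sum>k<m. if k = i then y k j else 0)" for j
      by (rule sum.cong) (simp_all add: unit_vec_def)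
    then have "(\<Sum>k<m. unit_vec i k * y k j) = y i j" for j using i by simp
    then show "N (unit_vec i) = y i" using assms i by (simp add: N_def kernel_def reduce_id)
  qed
  show "N \<in> hom A A"
  proof (rule homI)
    fix x x' assume "x \<in> carrier A" "x' \<in> carrier A"
    show "N (x \<otimes>\<^bsub>A\<^esub> x') = N x \<otimes>\<^bsub>A\<^esub> N x'"
      unfolding N_def mult_cyc_prod
    proof (rule reduce_cong)
      fix j assume j: "j < m"
      have "(reduce (\<lambda>i. x i + x' i) i * y i j) mod modulus j = ((x i + x' i) * y i j) mod modulus j"
        if i: "i < m" for i
      proof -
        obtain c where c: "modulus i * y i j = modulus j * c" using killed[OF i j] by (rule dvdE)
        have "reduce (\<lambda>i. x i + x' i) i * y i j
            = (x i + x' i) * y i j + modulus j * (- ((x i + x' i) div modulus i) * c)"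
          using i c by (simp add: reduce_def minus_div_mult_eq_mod[symmetric] algebra_simps)
        then show ?thesis by (simp only: mod_mult_self2)
      qed
      then have "(\<Sum>i<m. reduce (\<lambda>i. x i + x' i) i * y i j) mod modulus j
          = (\<Sum>i<m. x i * y i j + x' i * y i j) mod modulus j"
        by (subst (1 2) mod_sum_eq[symmetric]) (simp add: distrib_right)
      then show "(\<Sum>i<m. reduce (\<lambda>i. x i + x' i) i * y i j) mod modulus j
          = (reduce (\<lambda>j. \<Sum>i<m. x i * y i j) j + reduce (\<lambda>j. \<Sum>i<m. x' i * y i j) j) mod modulus j"
        using j by (simp add: reduce_mod_simps sum.distrib)
    qed
  qed (simp add: N_def)
qed

definition multiples :: "(nat \<Rightarrow> nat) \<Rightarrow> (nat \<Rightarrow> int) set" where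
  "multiples e = {x \<in> carrier A. \<forall>i<m. int p ^ e i dvd x i}"

lemma card_multiples:
  assumes e: "\<forall>i<m. e i \<le> \<alpha> i"
  shows "finite (multiples e)" "card (multiples e) = (\<Prod>i<m. p ^ (\<alpha> i - e i))"
proof -
  define B where "B = PiE {..<m} (\<lambda>i. {0..<int p ^ (\<alpha> i - e i)})"
  define scale where "scale g = (\<lambda>i. if i < m then int p ^ e i * g i else 0)" for g :: "nat \<Rightarrow> int"
  define unscale where "unscale x = restrict (\<lambda>i. x i div int p ^ e i) {..<m}" for x :: "nat \<Rightarrow> int"
  have split: "modulus i = int p ^ e i * int p ^ (\<alpha> i - e i)" if "i < m" for i
    using e that by (simp add: modulus_def flip: power_add)
  have pos: "int p ^ k > 0" for k using p_gt_1 by simp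
  have "bij_betw scale B (multiples e)"
  proof (rule bij_betw_byWitness[where f' = unscale])
    show "\<forall>g\<in>B. unscale (scale g) = g"
    proof (intro ballI ext)
      fix g i assume "g \<in> B"
      then show "unscale (scale g) i = g i"
        using pos[of "e i"] PiE_arb[of g "{..<m}" _ i] by (simp add: B_def scale_def unscale_def)
    qed
    show "\<forall>x\<in>multiples e. scale (unscale x) = x"
    proof (intro ballI ext)
      fix x i assume x: "x \<in> multiples e"
      show "scale (unscale x) i = x i"
      proof (cases "i < m")
        case True
        then have "int p ^ e i dvd x i" using x by (simp add: multiples_def)
        then show ?thesis using True by (simp add: scale_def unscale_def)
      next
        case False
        then show ?thesis using x by (simp add: scale_def multiples_def carrier_cyc_prod)
      qed
    qed
    show "scale ` B \<subseteq> multiples e"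
    proof clarify
      fix g assume g: "g \<in> B"
      have "0 \<le> int p ^ e i * g i \<and> int p ^ e i * g i < modulus i" if "i < m" for i
      proof -
        have "g i \<in> {0..<int p ^ (\<alpha> i - e i)}" using PiE_mem[OF g[unfolded B_def], of i] that by simp
        then show ?thesis using pos[of "e i"] split[OF that] by simp
      qed
      then show "scale g \<in> multiples e"
        unfolding multiples_def carrier_cyc_prod scale_def by simp
    qed
    show "unscale ` multiples e \<subseteq> B"
    proof clarify
      fix x assume x: "x \<in> multiples e"
      have "x i div int p ^ e i \<in> {0..<int p ^ (\<alpha> i - e i)}" if i: "i < m" for i
      proof -
        obtain t where t: "x i = int p ^ e i * t" using x i unfolding multiples_def by blast
        have "0 \<le> int p ^ e i * t" "int p ^ e i * t < int p ^ e i * int p ^ (\<alpha> i - e i)"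
          using x i t split[OF i] unfolding multiples_def carrier_cyc_prod by auto
        then show ?thesis
          using t pos[of "e i"] by (simp add: zero_le_mult_iff mult_less_cancel_left_pos)
      qed
      then show "unscale x \<in> B" by (simp add: B_def unscale_def)
    qed
  qed
  moreover have "finite B" by (simp add: B_def finite_PiE)
  moreover have "card B = (\<Prod>i<m. p ^ (\<alpha> i - e i))"
    by (simp add: B_def card_PiE flip: of_nat_power)
  ultimately show "finite (multiples e)" "card (multiples e) = (\<Prod>i<m. p ^ (\<alpha> i - e i))"
    by (auto simp: bij_betw_finite bij_betw_same_card)
qed

lemma torsion_eq_multiples: "torsion a = multiples (\<lambda>i. \<alpha> i - min a (\<alpha> i))"
  using p_gt_1 by (auto simp: kernel_def multiples_def pow_eq_one_cyc_prod modulus_def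
      power_dvd_power_mult_iff[of "int p"])

lemma pth_powers_torsion_eq_multiples:
  assumes "a \<ge> 1"
  shows "(\<lambda>y. y [^]\<^bsub>A\<^esub> p) ` torsion a = multiples (\<lambda>i. Suc (\<alpha> i - min a (\<alpha> i)))"
    (is "_ ` _ = multiples ?e'")
proof
  show "(\<lambda>y. y [^]\<^bsub>A\<^esub> p) ` torsion a \<subseteq> multiples ?e'"
  proof clarify
    fix y assume y: "y \<in> torsion a"
    then have "y \<in> carrier A" by (simp add: kernel_def)
    have "int p ^ ?e' i dvd (int p * y i) mod modulus i" if i: "i < m" for i
    proof -
      have "int p ^ ?e' i dvd int p * y i"
        using y i by (simp add: torsion_eq_multiples multiples_def)
      moreover have "int p ^ ?e' i dvd modulus i"
        unfolding modulus_def using assms exponent_pos i by (intro le_imp_power_dvd) auto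
      ultimately show ?thesis by (simp add: dvd_mod)
    qed
    then show "y [^]\<^bsub>A\<^esub> p \<in> multiples ?e'"
      unfolding multiples_def nat_pow_cyc_prod[OF \<open>y \<in> carrier A\<close>]
      using reduce_closed[of "\<lambda>i. int p * y i"] by (simp add: reduce_def)
  qed
  show "multiples ?e' \<subseteq> (\<lambda>y. y [^]\<^bsub>A\<^esub> p) ` torsion a"
  proof
    fix x assume x: "x \<in> multiples ?e'"
    define y where "y i = x i div int p" for i
    have p_dvd: "int p dvd x i" if "i < m" for i
      using x that dvd_trans[of "int p" "int p ^ ?e' i" "x i"] by (simp add: multiples_def)
    have x_carrier: "x \<in> carrier A" using x by (simp add: multiples_def)
    have "0 \<le> y i \<and> y i < modulus i" if "i < m" for i
    proof -
      have "0 \<le> x i" "x i < modulus i" using x_carrier that by (auto simp: carrier_cyc_prod)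
      moreover have "x i div int p \<le> x i"
        using \<open>0 \<le> x i\<close> int_div_le_self[of "x i" "int p"] by (cases "x i = 0") auto
      ultimately show ?thesis using p_gt_1 by (simp add: y_def pos_imp_zdiv_nonneg_iff)
    qed
    then have "y \<in> carrier A"
      using x_carrier by (simp add: carrier_cyc_prod y_def)
    have "int p ^ (\<alpha> i - min a (\<alpha> i)) dvd y i" if i: "i < m" for i
    proof -
      obtain t where "x i = int p ^ ?e' i * t" using x i by (auto simp: multiples_def)
      then show ?thesis using p_gt_1 by (simp add: y_def)
    qed
    then have "y \<in> torsion a"
      using \<open>y \<in> carrier A\<close> by (simp add: torsion_eq_multiples multiples_def)
    moreover have "y [^]\<^bsub>A\<^esub> p = reduce x"
      unfolding nat_pow_cyc_prod[OF \<open>y \<in> carrier A\<close>] using p_dvd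
      by (intro reduce_cong) (simp add: y_def)
    then have "y [^]\<^bsub>A\<^esub> p = x" using reduce_id[OF x_carrier] by simp
    ultimately show "x \<in> (\<lambda>y. y [^]\<^bsub>A\<^esub> p) ` torsion a" by blast
  qed
qed

lemma card_torsion:
  assumes "a \<ge> 1"
  shows "finite (torsion a)" "card (torsion a) = p ^ m * card ((\<lambda>y. y [^]\<^bsub>A\<^esub> p) ` torsion a)"
    "\<exists>e. card (torsion a) = p ^ e"
proof -
  let ?e = "\<lambda>i. \<alpha> i - min a (\<alpha> i)"
  have Suc_le: "\<forall>i<m. Suc (?e i) \<le> \<alpha> i" using assms exponent_pos by auto
  show "finite (torsion a)" using card_multiples[of ?e] by (simp add: torsion_eq_multiples)
  have "card (torsion a) = (\<Prod>i<m. p * p ^ (\<alpha> i - Suc (?e i)))"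
    unfolding torsion_eq_multiples card_multiples(2)[of ?e, simplified]
    using Suc_le by (intro prod.cong) (auto simp flip: power_Suc)
  also have "\<dots> = p ^ m * card ((\<lambda>y. y [^]\<^bsub>A\<^esub> p) ` torsion a)"
    unfolding pth_powers_torsion_eq_multiples[OF assms] card_multiples(2)[OF Suc_le]
    by (simp add: prod.distrib)
  finally show "card (torsion a) = p ^ m * card ((\<lambda>y. y [^]\<^bsub>A\<^esub> p) ` torsion a)" .
  show "\<exists>e. card (torsion a) = p ^ e"
    unfolding torsion_eq_multiples card_multiples(2)[of ?e, simplified] power_sum[symmetric] by blast
qed

lemma unit_vec_torsion: "i < m \<Longrightarrow> unit_vec i \<in> torsion (\<alpha> i)"
  using unit_vec_closed by (auto simp: torsion_eq_multiples multiples_def unit_vec_def)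

lemma endo_minus_id_power_unit_vec:
  assumes M: "M \<in> hom A A" and period: "\<forall>x\<in>carrier A. (M ^^ (p ^ k)) x = x" and i: "i < m"
  shows "((\<lambda>x. M x \<otimes>\<^bsub>A\<^esub> inv\<^bsub>A\<^esub> x) ^^ m) (unit_vec i) \<in> (\<lambda>y. y [^]\<^bsub>A\<^esub> p) ` torsion (\<alpha> i)"
proof -
  let ?D = "\<lambda>x. M x \<otimes>\<^bsub>A\<^esub> inv\<^bsub>A\<^esub> x" and ?H = "torsion (\<alpha> i)"
  have D: "?D \<in> hom A A" by (rule A.endo_minus_id_hom[OF M])
  have H: "subgroup ?H A" by (rule A.subgroup_pow_kernel)
  have H_invariant: "f x \<in> ?H" if "f \<in> hom A A" "x \<in> ?H" for f x
    using A.endo_pow_kernel[OF that] .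
  obtain s where s: "\<forall>x\<in>carrier A. (?D ^^ (p ^ k)) x = poly_endo A M s x [^]\<^bsub>A\<^esub> p"
    using A.endo_minus_id_power_prime_power[OF prime M period] by blast
  have \<alpha>: "\<alpha> i \<ge> 1" using exponent_pos i by simp
  obtain e where "card ?H = p ^ e" using card_torsion(3)[OF \<alpha>] by blast
  show ?thesis
  proof (rule A.funpow_endo_into_subgroup[OF prime D H card_torsion(1)[OF \<alpha>] \<open>card ?H = p ^ e\<close>
        A.subgroup_pow_image[OF H] _ _ _ _ card_torsion(2)[OF \<alpha>] unit_vec_torsion[OF i]])
    show "(\<lambda>y. y [^]\<^bsub>A\<^esub> p) ` ?H \<subseteq> ?H" using H_invariant[OF A.nat_pow_hom] by blast
    show "?D x \<in> ?H" if "x \<in> ?H" for x using H_invariant[OF D that] .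
    show "?D y \<in> (\<lambda>y. y [^]\<^bsub>A\<^esub> p) ` ?H" if "y \<in> (\<lambda>y. y [^]\<^bsub>A\<^esub> p) ` ?H" for y
      using A.endo_pow_image[OF D _ _ that] H_invariant[OF D] subgroup.subset[OF H] by blast
    show "(?D ^^ (p ^ k)) x \<in> (\<lambda>y. y [^]\<^bsub>A\<^esub> p) ` ?H" if "x \<in> ?H" for x
      using s H_invariant[OF A.poly_endo_hom[OF M] that] subgroup.subset[OF H] that by auto
  qed
qed

lemma endo_minus_id_power_eq_pth_power:
  assumes M: "M \<in> hom A A" and period: "\<forall>x\<in>carrier A. (M ^^ (p ^ k)) x = x"
  shows "\<exists>N \<in> hom A A. \<forall>x\<in>carrier A. ((\<lambda>x. M x \<otimes>\<^bsub>A\<^esub> inv\<^bsub>A\<^esub> x) ^^ m) x = N x [^]\<^bsub>A\<^esub> p"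
proof -
  let ?D = "\<lambda>x. M x \<otimes>\<^bsub>A\<^esub> inv\<^bsub>A\<^esub> x"
  define Y where "Y i = (SOME y. y \<in> torsion (\<alpha> i) \<and> y [^]\<^bsub>A\<^esub> p = (?D ^^ m) (unit_vec i))" for i
  have Y: "\<forall>i<m. Y i \<in> torsion (\<alpha> i) \<and> Y i [^]\<^bsub>A\<^esub> p = (?D ^^ m) (unit_vec i)"
  proof (intro allI impI)
    fix i assume "i < m"
    obtain y where "y \<in> torsion (\<alpha> i)" "(?D ^^ m) (unit_vec i) = y [^]\<^bsub>A\<^esub> p"
      using endo_minus_id_power_unit_vec[OF M period \<open>i < m\<close>] by blast
    then have "\<exists>y. y \<in> torsion (\<alpha> i) \<and> y [^]\<^bsub>A\<^esub> p = (?D ^^ m) (unit_vec i)"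
      by (intro exI[of _ y]) simp
    from someI_ex[OF this] show "Y i \<in> torsion (\<alpha> i) \<and> Y i [^]\<^bsub>A\<^esub> p = (?D ^^ m) (unit_vec i)"
      unfolding Y_def .
  qed
  then obtain N where N: "N \<in> hom A A" "\<forall>i<m. N (unit_vec i) = Y i"
    using ex_hom_unit_vec_images[of Y] by blast
  have "(?D ^^ m) x = N x [^]\<^bsub>A\<^esub> p" if "x \<in> carrier A" for x
  proof (rule hom_eq_on_unit_vecs[OF A.funpow_hom[OF A.endo_minus_id_hom[OF M]] _ _ that])
    show "(\<lambda>x. N x [^]\<^bsub>A\<^esub> p) \<in> hom A A"
      using hom_compose[OF N(1) A.nat_pow_hom] by (simp add: comp_def)
    show "\<forall>i<m. (?D ^^ m) (unit_vec i) = N (unit_vec i) [^]\<^bsub>A\<^esub> p" using Y N(2) by simp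
  qed
  then show ?thesis using N(1) by blast
qed

end

theorem lemma2p7:
  fixes p m :: nat and \<alpha> :: "nat \<Rightarrow> nat" and M :: "(nat \<Rightarrow> int) \<Rightarrow> (nat \<Rightarrow> int)"
  defines "A \<equiv> cyc_prod p \<alpha> m"
  assumes "prime p"
    and "\<forall>i<m. 1 \<le> \<alpha> i"
    and "\<forall>i j. i \<le> j \<and> j < m \<longrightarrow> \<alpha> i \<le> \<alpha> j"
    and "M \<in> hom A A" and "bij_betw M (carrier A) (carrier A)"
    and "\<exists>k. \<forall>a\<in>carrier A. (M ^^ (p ^ k)) a = a"
  shows "\<exists>N \<in> hom A A. \<forall>a\<in>carrier A.
           ((\<lambda>x. M x \<otimes>\<^bsub>A\<^esub> inv\<^bsub>A\<^esub> x) ^^ m) a = N a [^]\<^bsub>A\<^esub> p"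
proof -
  interpret cyclic_prime_power_product p m \<alpha> using assms(2,3) by unfold_locales
  obtain k where "\<forall>a\<in>carrier A. (M ^^ (p ^ k)) a = a" using assms(7) by blast
  then show ?thesis
    using endo_minus_id_power_eq_pth_power[of M k] assms(5) unfolding A_def by blast
qed

end
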